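(* Let $\nu \in (0,1)$ and $\lambda,\kappa>0$ be such that $6\kappa+\lambda<\nu$. Then there is a subspace $\mathcal{C}\subset(\mathbb{C}^2)^{\otimes n}$ spanned by descendant states $\{S_-^r|\Psi\rangle\}_r$ with magnetizations $r$ pairwise differing by at least $2$ such that $\mathcal{C}$ is an $(\epsilon,\delta)[[n,k,d]]$-AQEDC with parameters \[ k=\kappa \log_2 n,\qquad d=n^{1-\nu},\qquad \epsilon =\Theta(n^{-(\nu-(6\kappa+\lambda))}),\qquad \delta=n^{-\lambda}. \]
   Context: On $n$ qubits, let $\omega=e^{2\pi i/n}$, $\sigma_m^-=|0\rangle\langle1|$ on qubit $m$, $S_-=\sum_{m=1}^n\sigma^-_m$, and $|\Psi\rangle=\overline{\omega}\sum_{m=1}^n\omega^m\sigma_m^-|1\rangle^{\otimes n}$ (the one-magnon, momentum-$2\pi/n$ low-energy eigenstate of the periodic Heisenberg XXX chain $H=-\frac14\sum_m(\sigma^x_m\sigma^x_{m+1}+\sigma^y_m\sigma^y_{m+1}+\sigma^z_m\sigma^z_{m+1})$); its descendants $S_-^r|\Psi\rangle$, $r=0,\dots,n-2$, have magnetization indexed by $r$. A $d$-local operator acts as $F_S\otimes I$ on some set $S$ of $d$ (not necessarily contiguous) qubits. A subspace $\mathcal{C}$ with projection $P$ is an $(\epsilon,\delta)$-approximate error-detection code for a CPTP map $\mathcal{N}$ if for every unit $|\Phi\rangle\in\mathcal{C}$ with $\mathrm{tr}(P\mathcal{N}(|\Phi\rangle\langle\Phi|))\ge\delta$ one has $\langle\Phi|\rho_{\mathcal{N},P}|\Phi\rangle\ge1-\epsilon$,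 where $\rho_{\mathcal{N},P}=\mathrm{tr}(P\mathcal{N}(|\Phi\rangle\langle\Phi|))^{-1}P\mathcal{N}(|\Phi\rangle\langle\Phi|)P$. An $(\epsilon,\delta)[[n,k,d]]$-AQEDC is a $2^k$-dimensional subspace that is an $(\epsilon,\delta)$-approximate error-detection code for every CPTP map $\mathcal{N}(\rho)=\sum_jp_jF_j\rho F_j^\dagger$ with each $F_j$ $d$-local, $\|F_j\|\le1$, and $\{p_j\}$ a probability distribution. *)

theory Defs
  imports "HOL-Analysis.Analysis" "HOL-Library.Landau_Symbols"
begin

text \<open>n-qubit states: the computational basis of (C^2)^{\<otimes> n} is indexed by the set
 of qubits (numbered 0..n-1) that are in state |1>.  Vectors are functions on these sets,
 operators are matrices indexed by pairs of such sets; only values on cfg n matter.\<close>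

type_synonym qvec = "nat set \<Rightarrow> complex"
type_synonym qop = "nat set \<Rightarrow> nat set \<Rightarrow> complex"

definition cfg :: "nat \<Rightarrow> nat set set" where
  "cfg n = Pow {..<n}"

definition app :: "nat \<Rightarrow> qop \<Rightarrow> qvec \<Rightarrow> qvec" where
  "app n A v = (\<lambda>x. \<Sum>y\<in>cfg n. A x y * v y)"

definition inner_q :: "nat \<Rightarrow> qvec \<Rightarrow> qvec \<Rightarrow> complex" where
  "inner_q n u v = (\<Sum>x\<in>cfg n. cnj (u x) * v x)"

definition vnorm :: "nat \<Rightarrow> qvec \<Rightarrow> real" where
  "vnorm n v = sqrt (\<Sum>x\<in>cfg n. (cmod (v x))\<^sup>2)"

definition mult_q :: "nat \<Rightarrow> qop \<Rightarrow> qop \<Rightarrow> qop" where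
  "mult_q n A B = (\<lambda>x z. \<Sum>y\<in>cfg n. A x y * B y z)"

definition adj_q :: "qop \<Rightarrow> qop" where
  "adj_q A = (\<lambda>x y. cnj (A y x))"

definition id_q :: qop where
  "id_q = (\<lambda>x y. if x = y then 1 else 0)"

definition trace_q :: "nat \<Rightarrow> qop \<Rightarrow> complex" where
  "trace_q n A = (\<Sum>x\<in>cfg n. A x x)"

definition ketbra :: "qvec \<Rightarrow> qvec \<Rightarrow> qop" where
  "ketbra u v = (\<lambda>x y. u x * cnj (v y))"

definition op_norm :: "nat \<Rightarrow> qop \<Rightarrow> real" where
  "op_norm n A = Sup {vnorm n (app n A v) | v. vnorm n v = 1}"

text \<open>A acts as F_S \<otimes> I for some set S of exactly d qubits.\<close>
definition local_op :: "nat \<Rightarrow> nat \<Rightarrow> qop \<Rightarrow> bool" where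
  "local_op n d A \<longleftrightarrow> (\<exists>S G. S \<subseteq> {..<n} \<and> card S = d \<and>
     (\<forall>x\<in>cfg n. \<forall>y\<in>cfg n.
        A x y = (if x - S = y - S then G (x \<inter> S) (y \<inter> S) else 0)))"

definition channel :: "nat \<Rightarrow> nat \<Rightarrow> (nat \<Rightarrow> real) \<Rightarrow> (nat \<Rightarrow> qop) \<Rightarrow> qop \<Rightarrow> qop" where
  "channel n m p K \<rho> =
     (\<lambda>x y. \<Sum>j<m. complex_of_real (p j) * mult_q n (mult_q n (K j) \<rho>) (adj_q (K j)) x y)"

definition admissible_noise :: "nat \<Rightarrow> nat \<Rightarrow> nat \<Rightarrow> (nat \<Rightarrow> real) \<Rightarrow> (nat \<Rightarrow> qop) \<Rightarrow> bool" where
  "admissible_noise n d m p K \<longleftrightarrow>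
     (\<forall>j<m. p j \<ge> 0) \<and> (\<Sum>j<m. p j) = 1 \<and>
     (\<forall>j<m. local_op n d (K j) \<and> op_norm n (K j) \<le> 1) \<and>
     (\<forall>x\<in>cfg n. \<forall>y\<in>cfg n.
        (\<Sum>j<m. complex_of_real (p j) * mult_q n (adj_q (K j)) (K j) x y) = id_q x y)"

definition approx_detect ::
  "nat \<Rightarrow> real \<Rightarrow> real \<Rightarrow> qvec set \<Rightarrow> qop \<Rightarrow> (qop \<Rightarrow> qop) \<Rightarrow> bool" where
  "approx_detect n eps delta C P N \<longleftrightarrow>
     (\<forall>\<Phi>\<in>C. vnorm n \<Phi> = 1 \<longrightarrow>
        (let t = Re (trace_q n (mult_q n P (N (ketbra \<Phi> \<Phi>))));
             \<rho> = (\<lambda>x y. mult_q n (mult_q n P (N (ketbra \<Phi> \<Phi>))) P x y / complex_of_real t)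
         in t \<ge> delta \<longrightarrow> Re (inner_q n \<Phi> (app n \<rho> \<Phi>)) \<ge> 1 - eps))"

definition AQEDC :: "nat \<Rightarrow> real \<Rightarrow> real \<Rightarrow> nat \<Rightarrow> nat \<Rightarrow> qvec set \<Rightarrow> bool" where
  "AQEDC n eps delta k d C \<longleftrightarrow>
     (\<exists>b :: nat \<Rightarrow> qvec.
        (\<forall>i<2^k. \<forall>x. x \<notin> cfg n \<longrightarrow> b i x = 0) \<and>
        (\<forall>i<2^k. \<forall>j<2^k. inner_q n (b i) (b j) = (if i = j then 1 else 0)) \<and>
        C = {v. \<exists>c. v = (\<lambda>x. \<Sum>i<2^k. c i * b i x)} \<and>
        (let P = (\<lambda>x y. \<Sum>i<2^k. ketbra (b i) (b i) x y) in
         \<forall>m p K. admissible_noise n d m p K \<longrightarrow> approx_detect n eps delta C P (channel n m p K)))"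

text \<open>Spin operators and the magnon state.  Qubit m (0-based) is qubit m+1 of the paper.\<close>
definition sigma_minus :: "nat \<Rightarrow> qop" where
  "sigma_minus m = (\<lambda>x y. if m \<in> y \<and> x = y - {m} then 1 else 0)"

definition S_minus :: "nat \<Rightarrow> qop" where
  "S_minus n = (\<lambda>x y. \<Sum>m<n. sigma_minus m x y)"

definition all_ones :: "nat \<Rightarrow> qvec" where
  "all_ones n = (\<lambda>x. if x = {..<n} then 1 else 0)"

definition omega :: "nat \<Rightarrow> complex" where
  "omega n = exp (2 * pi * \<i> / of_nat n)"

definition Psi :: "nat \<Rightarrow> qvec" where
  "Psi n = (\<lambda>x. cnj (omega n) *
      (\<Sum>m<n. omega n ^ (m + 1) * app n (sigma_minus m) (all_ones n) x))"

definition descendant :: "nat \<Rightarrow> nat \<Rightarrow> qvec" where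
  "descendant n r = (app n (S_minus n) ^^ r) (Psi n)"

definition desc_span :: "nat \<Rightarrow> nat set \<Rightarrow> qvec set" where
  "desc_span n R = {v. \<exists>c. v = (\<lambda>x. \<Sum>r\<in>R. c r * descendant n r x)}"

end

theory Submission
  imports Defs
begin

text \<open>An operator \<open>G \<otimes> I\<close> supported on a set \<open>S\<close> of qubits acts as the scalar \<open>G S S\<close>
  on every configuration in which all qubits of \<open>S\<close> are excited.  The descendant
  \<open>S_-^r |\<Psi>\<rangle>\<close> lives on configurations with \<open>r + 1\<close> holes, with amplitude \<open>r!\<close> times a sum
  of \<open>r + 1\<close> roots of unity, and a counting argument shows that the holes meet a fixed set of
  \<open>d\<close> qubits only on a fraction \<open>2 d (r + 1)^2 / n\<close> of its squared norm.  So on the span of the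
  normalized descendants with \<open>r = 0, 2, \<dots>, 2N - 2\<close> every \<open>d\<close>-local contraction is a scalar
  up to matrix elements of size \<open>\<eta> = O(N sqrt (d N^2 / n))\<close>.  Expanding the Kraus images in the
  code basis, the detection probability \<open>t\<close> exceeds the unnormalized fidelity by at most
  \<open>N^3 \<eta>^2 = O(d N^5 / n)\<close>, so the infidelity is \<open>O(d N^5 / (n \<delta>))\<close> once \<open>t \<ge> \<delta>\<close>.  With
  \<open>N \<le> n^\<kappa>\<close>, \<open>d \<le> n^(1 - \<nu>)\<close> and \<open>\<delta> = n^(-\<lambda>)\<close> this is \<open>O(n^(-(\<nu> - 5\<kappa> - \<lambda>)))\<close>.\<close>

section \<open>Vectors and operators on n qubits\<close>

lemma finite_cfg [simp]: "finite (cfg n)"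
  by (simp add: cfg_def)

lemma mem_cfg_iff: "x \<in> cfg n \<longleftrightarrow> x \<subseteq> {..<n}"
  by (simp add: cfg_def)

definition sqnorm_q :: "nat \<Rightarrow> qvec \<Rightarrow> real" where
  "sqnorm_q n v = (\<Sum>x\<in>cfg n. (cmod (v x))\<^sup>2)"

lemma sqnorm_q_nonneg: "sqnorm_q n v \<ge> 0"
  unfolding sqnorm_q_def by (intro sum_nonneg) simp

lemma vnorm_eq_sqrt_sqnorm_q: "vnorm n v = sqrt (sqnorm_q n v)"
  by (simp add: vnorm_def sqnorm_q_def)

lemma vnorm_nonneg: "vnorm n v \<ge> 0"
  by (simp add: vnorm_eq_sqrt_sqnorm_q sqnorm_q_nonneg)

lemma vnorm_power2: "(vnorm n v)\<^sup>2 = sqnorm_q n v"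
  using sqnorm_q_nonneg[of n v] by (simp add: vnorm_eq_sqrt_sqnorm_q)

lemma vnorm_eq_L2_set: "vnorm n v = L2_set (\<lambda>x. cmod (v x)) (cfg n)"
  by (simp add: vnorm_def L2_set_def)

lemma vnorm_mono:
  "(\<And>x. x \<in> cfg n \<Longrightarrow> cmod (u x) \<le> cmod (v x)) \<Longrightarrow> vnorm n u \<le> vnorm n v"
  unfolding vnorm_eq_sqrt_sqnorm_q sqnorm_q_def
  by (intro real_sqrt_le_mono sum_mono power_mono) auto

lemma cmod_power2_eq: "(complex_of_real (cmod z))\<^sup>2 = z * cnj z"
  by (metis complex_norm_square of_real_power)

lemma cmod_le_one_of_sum_power2:
  fixes c :: "'a \<Rightarrow> complex"
  assumes "finite A" "i \<in> A" "(\<Sum>j\<in>A. (cmod (c j))\<^sup>2) = 1"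
  shows "cmod (c i) \<le> 1"
proof -
  have "(cmod (c i))\<^sup>2 \<le> (\<Sum>j\<in>A. (cmod (c j))\<^sup>2)"
    using assms(1,2) by (intro member_le_sum) auto
  thus ?thesis using assms(3) by (simp add: power_le_one_iff abs_le_square_iff)
qed

lemma inner_q_self: "inner_q n v v = complex_of_real (sqnorm_q n v)"
  unfolding inner_q_def sqnorm_q_def of_real_sum
  by (intro sum.cong refl) (metis complex_norm_square mult.commute)

lemma inner_q_commute: "inner_q n v u = cnj (inner_q n u v)"
  unfolding inner_q_def by (simp add: cnj_sum mult.commute)

lemma inner_q_Cauchy_Schwarz: "cmod (inner_q n u v) \<le> vnorm n u * vnorm n v"
proof -
  have "cmod (inner_q n u v) \<le> (\<Sum>x\<in>cfg n. cmod (cnj (u x) * v x))"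
    unfolding inner_q_def by (rule norm_sum)
  also have "\<dots> = (\<Sum>x\<in>cfg n. \<bar>cmod (u x)\<bar> * \<bar>cmod (v x)\<bar>)"
    by (simp add: norm_mult)
  also have "\<dots> \<le> vnorm n u * vnorm n v"
    unfolding vnorm_eq_L2_set by (rule L2_set_mult_ineq)
  finally show ?thesis .
qed

lemma sqnorm_q_scale: "sqnorm_q n (\<lambda>x. c * v x) = (cmod c)\<^sup>2 * sqnorm_q n v"
  unfolding sqnorm_q_def by (simp add: sum_distrib_left norm_mult power_mult_distrib)

lemma vnorm_scale: "vnorm n (\<lambda>x. c * v x) = cmod c * vnorm n v"
  by (simp add: vnorm_eq_sqrt_sqnorm_q sqnorm_q_scale real_sqrt_mult)

lemma app_scale: "app n A (\<lambda>x. c * v x) = (\<lambda>x. c * app n A v x)"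
  unfolding app_def by (auto simp: sum_distrib_left algebra_simps)

lemma app_add: "app n A (\<lambda>x. u x + v x) = (\<lambda>x. app n A u x + app n A v x)"
  unfolding app_def by (simp add: distrib_left sum.distrib)

lemma app_sum: "app n A (\<lambda>x. \<Sum>j<m. a j * f j x) = (\<lambda>x. \<Sum>j<m. a j * app n A (f j) x)"
  unfolding app_def by (auto simp: sum_distrib_left intro!: ext sum.swap[THEN trans] simp: algebra_simps)

lemma app_sum_op:
  "app n (\<lambda>x y. \<Sum>j<m. a j * F j x y) v = (\<lambda>x. \<Sum>j<m. a j * app n (F j) v x)"
  unfolding app_def
  by (auto simp: sum_distrib_left sum_distrib_right intro!: ext sum.swap[THEN trans] simp: algebra_simps)

lemma app_divide_op: "app n (\<lambda>x y. F x y / c) v = (\<lambda>x. app n F v x / c)"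
  unfolding app_def by (simp add: sum_divide_distrib)

lemma app_ketbra: "app n (ketbra a b) v = (\<lambda>x. a x * inner_q n b v)"
  unfolding app_def ketbra_def inner_q_def by (auto simp: sum_distrib_left algebra_simps)

lemma inner_q_add_left: "inner_q n (\<lambda>x. u x + v x) w = inner_q n u w + inner_q n v w"
  unfolding inner_q_def by (simp add: distrib_right sum.distrib)

lemma inner_q_add_right: "inner_q n u (\<lambda>x. v x + w x) = inner_q n u v + inner_q n u w"
  unfolding inner_q_def by (simp add: distrib_left sum.distrib)

lemma inner_q_scale_left: "inner_q n (\<lambda>x. c * u x) v = cnj c * inner_q n u v"
  unfolding inner_q_def by (simp add: sum_distrib_left algebra_simps)

lemma inner_q_scale_right: "inner_q n u (\<lambda>x. c * v x) = c * inner_q n u v"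
  unfolding inner_q_def by (simp add: sum_distrib_left algebra_simps)

lemma inner_q_divide_right: "inner_q n u (\<lambda>x. v x / c) = inner_q n u v / c"
  unfolding inner_q_def by (simp add: sum_divide_distrib)

lemma inner_q_sum_left:
  "inner_q n (\<lambda>x. \<Sum>j<m. a j * f j x) v = (\<Sum>j<m. cnj (a j) * inner_q n (f j) v)"
  unfolding inner_q_def
  by (auto simp: sum_distrib_left sum_distrib_right cnj_sum intro!: sum.swap[THEN trans] simp: algebra_simps)

lemma inner_q_sum_right:
  "inner_q n u (\<lambda>x. \<Sum>j<m. a j * f j x) = (\<Sum>j<m. a j * inner_q n u (f j))"
  unfolding inner_q_def by (auto simp: sum_distrib_left intro!: sum.swap[THEN trans] simp: algebra_simps)

lemma mult_q_ketbra_left: "mult_q n A (ketbra u v) = ketbra (app n A u) v"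
  unfolding mult_q_def ketbra_def app_def by (simp add: sum_distrib_right mult.assoc)

lemma mult_q_ketbra_right: "mult_q n (ketbra u v) B = ketbra u (app n (adj_q B) v)"
  unfolding mult_q_def ketbra_def app_def adj_q_def by (simp add: sum_distrib_left mult_ac)

lemma mult_q_sum_left:
  "mult_q n (\<lambda>x y. \<Sum>j<m. a j * F j x y) B = (\<lambda>x y. \<Sum>j<m. a j * mult_q n (F j) B x y)"
  unfolding mult_q_def
  by (auto simp: sum_distrib_left sum_distrib_right intro!: ext sum.cong sum.swap[THEN trans] simp: algebra_simps)

lemma mult_q_sum_right:
  "mult_q n A (\<lambda>x y. \<Sum>j<m. a j * F j x y) = (\<lambda>x y. \<Sum>j<m. a j * mult_q n A (F j) x y)"
  unfolding mult_q_def
  by (auto simp: sum_distrib_left intro!: ext sum.cong sum.swap[THEN trans] simp: algebra_simps)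

lemma trace_q_sum: "trace_q n (\<lambda>x y. \<Sum>j<m. a j * F j x y) = (\<Sum>j<m. a j * trace_q n (F j))"
  unfolding trace_q_def by (simp add: sum_distrib_left sum.swap[of _ "{..<m}"])

lemma trace_q_ketbra: "trace_q n (ketbra u v) = inner_q n v u"
  unfolding trace_q_def ketbra_def inner_q_def by (simp add: mult.commute)

lemma mult_q_ketbra_adj: "mult_q n (ketbra u v) (adj_q B) = ketbra u (app n B v)"
  unfolding mult_q_def ketbra_def app_def adj_q_def by (simp add: sum_distrib_left mult_ac)

lemma channel_ketbra:
  "channel n m p K (ketbra u u) =
     (\<lambda>x y. \<Sum>j<m. complex_of_real (p j) * ketbra (app n (K j) u) (app n (K j) u) x y)"
  unfolding channel_def by (simp add: mult_q_ketbra_left mult_q_ketbra_adj)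

definition ket :: "nat set \<Rightarrow> qvec" where
  "ket z = (\<lambda>x. if x = z then 1 else 0)"

lemma vnorm_ket: "z \<in> cfg n \<Longrightarrow> vnorm n (ket z) = 1"
proof -
  assume z: "z \<in> cfg n"
  have "sqnorm_q n (ket z) = (\<Sum>x\<in>cfg n. if x = z then 1 else 0)"
    unfolding sqnorm_q_def ket_def by (intro sum.cong refl) simp
  thus ?thesis using z by (simp add: vnorm_eq_sqrt_sqnorm_q)
qed

lemma app_ket: "z \<in> cfg n \<Longrightarrow> app n A (ket z) = (\<lambda>x. A x z)"
  unfolding app_def ket_def by (simp add: if_distrib cong: if_cong)

lemma inner_q_ket_left:
  assumes "z \<in> cfg n"
  shows "inner_q n (ket z) v = v z"
proof -
  have "(\<lambda>x. cnj (ket z x) * v x) = (\<lambda>x. if x = z then v z else 0)"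
    by (auto simp: ket_def)
  thus ?thesis unfolding inner_q_def using assms by (simp only:) simp
qed

lemma vnorm_app_le_entry_sum:
  assumes "vnorm n v = 1"
  shows "vnorm n (app n A v) \<le> (\<Sum>x\<in>cfg n. \<Sum>y\<in>cfg n. cmod (A x y))"
proof -
  have v_le: "cmod (v y) \<le> 1" if "y \<in> cfg n" for y
    using assms that vnorm_power2[of n v]
    by (intro cmod_le_one_of_sum_power2[of "cfg n"]) (auto simp: sqnorm_q_def)
  have "vnorm n (app n A v) \<le> (\<Sum>x\<in>cfg n. \<bar>cmod (app n A v x)\<bar>)"
    unfolding vnorm_eq_L2_set by (rule L2_set_le_sum_abs)
  also have "\<dots> \<le> (\<Sum>x\<in>cfg n. \<Sum>y\<in>cfg n. cmod (A x y))"
  proof (intro sum_mono)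
    fix x
    have "\<bar>cmod (app n A v x)\<bar> \<le> (\<Sum>y\<in>cfg n. cmod (A x y * v y))"
      unfolding app_def by (simp add: norm_sum)
    also have "\<dots> \<le> (\<Sum>y\<in>cfg n. cmod (A x y))"
      by (intro sum_mono) (auto simp: norm_mult intro: mult_left_le v_le)
    finally show "\<bar>cmod (app n A v x)\<bar> \<le> (\<Sum>y\<in>cfg n. cmod (A x y))" .
  qed
  finally show ?thesis .
qed

lemma vnorm_app_le: "vnorm n (app n A v) \<le> op_norm n A * vnorm n v"
proof -
  let ?X = "{vnorm n (app n A v) | v. vnorm n v = 1}"
  have bdd: "bdd_above ?X"
    using vnorm_app_le_entry_sum by (intro bdd_aboveI) blast
  show ?thesis
  proof (cases "vnorm n v = 0")
    case True
    hence "v y = 0" if "y \<in> cfg n" for y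
      using that by (simp add: vnorm_eq_sqrt_sqnorm_q sqnorm_q_def sum_nonneg_eq_0_iff)
    hence "app n A v = (\<lambda>x. 0)"
      unfolding app_def by (intro ext sum.neutral) auto
    thus ?thesis using True by (simp add: vnorm_def)
  next
    case False
    let ?s = "vnorm n v"
    have s: "?s > 0" using False vnorm_nonneg[of n v] by linarith
    let ?w = "\<lambda>x. complex_of_real (1 / ?s) * v x"
    have "vnorm n ?w = 1" using s by (simp only: vnorm_scale norm_of_real) simp
    hence "vnorm n (app n A ?w) \<le> op_norm n A"
      unfolding op_norm_def using bdd by (intro cSup_upper) blast+
    moreover have "vnorm n (app n A ?w) = vnorm n (app n A v) / ?s"
      using s by (simp only: app_scale vnorm_scale norm_of_real) simp
    ultimately have "vnorm n (app n A v) \<le> ?s * op_norm n A"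
      using s by (simp add: divide_le_eq mult.commute)
    thus ?thesis by (simp add: mult.commute)
  qed
qed

lemma op_norm_nonneg: "op_norm n A \<ge> 0"
  using vnorm_app_le[of n A "ket {}"] vnorm_ket[of "{}" n]
    vnorm_nonneg[of n "app n A (ket {})"]
  by (simp add: mem_cfg_iff)

lemma inner_app_le: "cmod (inner_q n u (app n A v)) \<le> vnorm n u * (op_norm n A * vnorm n v)"
  by (rule order_trans[OF inner_q_Cauchy_Schwarz])
     (simp add: mult_left_mono vnorm_nonneg vnorm_app_le)

lemma cmod_diag_le_op_norm: "z \<in> cfg n \<Longrightarrow> cmod (A z z) \<le> op_norm n A"
  using inner_app_le[of n "ket z" A "ket z"]
  by (simp add: vnorm_ket app_ket inner_q_ket_left)

section \<open>Local operators near the fully excited state\<close>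

definition filled_part :: "nat set \<Rightarrow> qvec \<Rightarrow> qvec" where
  "filled_part S u = (\<lambda>x. if S \<subseteq> x then u x else 0)"

definition unfilled_part :: "nat set \<Rightarrow> qvec \<Rightarrow> qvec" where
  "unfilled_part S u = (\<lambda>x. if S \<subseteq> x then 0 else u x)"

lemma filled_add_unfilled_part: "(\<lambda>x. filled_part S u x + unfilled_part S u x) = u"
  by (auto simp: filled_part_def unfilled_part_def)

lemma unfilled_part_scale: "unfilled_part S (\<lambda>x. c * u x) = (\<lambda>x. c * unfilled_part S u x)"
  by (auto simp: unfilled_part_def)

lemma vnorm_filled_part_le: "vnorm n (filled_part S u) \<le> vnorm n u"
  by (intro vnorm_mono) (auto simp: filled_part_def)

lemma inner_q_split_filled:
  "inner_q n u v =
     inner_q n (filled_part S u) (filled_part S v) + inner_q n (unfilled_part S u) (unfilled_part S v)"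
  unfolding inner_q_def
  by (auto simp: filled_part_def unfilled_part_def sum.distrib[symmetric] intro!: sum.cong)

lemma inner_local_op_filled_part:
  assumes S: "S \<subseteq> {..<n}"
    and K: "\<forall>x\<in>cfg n. \<forall>y\<in>cfg n. K x y = (if x - S = y - S then G (x \<inter> S) (y \<inter> S) else 0)"
  shows "inner_q n (filled_part S u) (app n K (filled_part S v)) =
           K {..<n} {..<n} * inner_q n (filled_part S u) (filled_part S v)"
proof -
  have diag: "K {..<n} {..<n} = G S S"
    using K S by (simp add: mem_cfg_iff Int_absorb1)
  have row: "app n K (filled_part S v) x = G S S * v x" if x: "x \<in> cfg n" "S \<subseteq> x" for x
  proof -
    have "app n K (filled_part S v) x = (\<Sum>y\<in>cfg n. if y = x then G S S * v x else 0)"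
      unfolding app_def
    proof (intro sum.cong refl)
      fix y assume y: "y \<in> cfg n"
      show "K x y * filled_part S v y = (if y = x then G S S * v x else 0)"
      proof (cases "S \<subseteq> y")
        case True
        hence "x - S = y - S \<longleftrightarrow> x = y" using x by blast
        moreover have "x \<inter> S = S" using x by blast
        ultimately show ?thesis using K x y True by (auto simp: filled_part_def)
      qed (use x in \<open>auto simp: filled_part_def\<close>)
    qed
    also have "\<dots> = G S S * v x" using x by simp
    finally show ?thesis .
  qed
  show ?thesis
    unfolding inner_q_def diag sum_distrib_left
  proof (intro sum.cong refl)
    fix x assume "x \<in> cfg n"
    thus "cnj (filled_part S u x) * app n K (filled_part S v) x =
        G S S * (cnj (filled_part S u x) * filled_part S v x)"
      using row[of x] by (cases "S \<subseteq> x") (simp_all add: filled_part_def)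
  qed
qed

lemma local_op_inner_near_scalar:
  assumes loc: "local_op n d K" and K1: "op_norm n K \<le> 1"
    and u1: "vnorm n u \<le> 1" and v1: "vnorm n v \<le> 1"
    and u_unfilled: "\<And>S. S \<subseteq> {..<n} \<Longrightarrow> card S = d \<Longrightarrow> vnorm n (unfilled_part S u) \<le> e"
    and v_unfilled: "\<And>S. S \<subseteq> {..<n} \<Longrightarrow> card S = d \<Longrightarrow> vnorm n (unfilled_part S v) \<le> e"
  shows "cmod (inner_q n u (app n K v) - K {..<n} {..<n} * inner_q n u v) \<le> 2 * e + e\<^sup>2"
proof -
  obtain S G where S: "S \<subseteq> {..<n}" "card S = d"
    and K: "\<forall>x\<in>cfg n. \<forall>y\<in>cfg n. K x y = (if x - S = y - S then G (x \<inter> S) (y \<inter> S) else 0)"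
    using loc unfolding local_op_def by blast
  let ?\<mu> = "K {..<n} {..<n}"
  let ?fu = "filled_part S u" and ?fv = "filled_part S v"
  let ?uu = "unfilled_part S u" and ?uv = "unfilled_part S v"
  have uu: "vnorm n ?uu \<le> e" and uv: "vnorm n ?uv \<le> e"
    using u_unfilled[OF S] v_unfilled[OF S] .
  have e0: "e \<ge> 0" using uu vnorm_nonneg[of n ?uu] by linarith
  have fv: "vnorm n ?fv \<le> 1" using vnorm_filled_part_le[of n S v] v1 by linarith
  have \<mu>: "cmod ?\<mu> \<le> 1" using cmod_diag_le_op_norm[of "{..<n}" n K] K1 by (simp add: mem_cfg_iff)
  have "app n K v = (\<lambda>x. app n K ?fv x + app n K ?uv x)"
    by (simp add: app_add[symmetric] filled_add_unfilled_part)
  hence "inner_q n u (app n K v) =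
      inner_q n ?fu (app n K ?fv) + inner_q n ?uu (app n K ?fv) + inner_q n u (app n K ?uv)"
    by (simp add: inner_q_add_right inner_q_add_left[symmetric] filled_add_unfilled_part)
  moreover have "inner_q n ?fu (app n K ?fv) = ?\<mu> * inner_q n ?fu ?fv"
    by (rule inner_local_op_filled_part[OF S(1) K])
  moreover have "inner_q n u v = inner_q n ?fu ?fv + inner_q n ?uu ?uv"
    by (rule inner_q_split_filled)
  ultimately have "inner_q n u (app n K v) - ?\<mu> * inner_q n u v =
      inner_q n ?uu (app n K ?fv) + inner_q n u (app n K ?uv) - ?\<mu> * inner_q n ?uu ?uv"
    by (simp add: ring_distribs)
  moreover have "cmod (inner_q n ?uu (app n K ?fv)) \<le> e"
    using inner_app_le[of n ?uu K ?fv] mult_mono[OF uu mult_le_one[OF K1 vnorm_nonneg fv]]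
    by (simp add: e0 op_norm_nonneg vnorm_nonneg)
  moreover have "cmod (inner_q n u (app n K ?uv)) \<le> e"
    using inner_app_le[of n u K ?uv] mult_mono[OF u1 mult_mono[OF K1 uv]]
    by (simp add: e0 op_norm_nonneg vnorm_nonneg)
  moreover have "cmod (?\<mu> * inner_q n ?uu ?uv) \<le> e\<^sup>2"
    using mult_mono[OF \<mu> order_trans[OF inner_q_Cauchy_Schwarz mult_mono[OF uu uv]]]
    by (simp add: norm_mult e0 vnorm_nonneg power2_eq_square)
  ultimately show ?thesis
    by (smt (verit, best) norm_triangle_ineq4 norm_triangle_ineq)
qed

section \<open>A closed form for the descendant states\<close>

text \<open>The holes \<open>{..<n} - x\<close> of a configuration \<open>x\<close> are the \<open>r + 1\<close> flipped spins of
  \<open>S_-^r |\<Psi>\<rangle>\<close>: one of them, say \<open>m\<close>, is the magnon and carries the phase \<open>\<omega>^m\<close>,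
  and the other \<open>r\<close> were flipped by \<open>S_-\<close> in any of \<open>r!\<close> orders.\<close>

definition magnon_amp :: "nat \<Rightarrow> nat \<Rightarrow> qvec" where
  "magnon_amp n r x = (if x \<subseteq> {..<n} \<and> card x + r + 1 = n
     then fact r * (\<Sum>m\<in>{..<n} - x. omega n ^ m) else 0)"

lemma magnon_amp_outside_cfg: "x \<notin> cfg n \<Longrightarrow> magnon_amp n r x = 0"
  by (simp add: magnon_amp_def mem_cfg_iff)

lemma card_magnon_amp_support: "magnon_amp n r x \<noteq> 0 \<Longrightarrow> card x + r + 1 = n"
  by (simp add: magnon_amp_def split: if_splits)

lemma norm_omega: "cmod (omega n) = 1"
proof -
  have "2 * pi * \<i> / of_nat n = \<i> * complex_of_real (2 * pi / real n)" by simp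
  thus ?thesis unfolding omega_def by (simp only: norm_exp_i_times)
qed

lemma cnj_omega_mult: "cnj (omega n) * omega n = 1"
  using complex_norm_square[of "omega n"] by (simp add: norm_omega mult.commute)

lemma one_hole_iff: "x \<subseteq> {..<n} \<and> card x + 1 = n \<longleftrightarrow> (\<exists>m<n. x = {..<n} - {m})"
proof
  assume x: "x \<subseteq> {..<n} \<and> card x + 1 = n"
  hence "finite x" using finite_subset by blast
  hence "card ({..<n} - x) = 1" using x by (auto simp: card_Diff_subset)
  then obtain m where "{..<n} - x = {m}" by (rule card_1_singletonE)
  thus "\<exists>m<n. x = {..<n} - {m}" using x by auto
qed (auto simp: card_Diff_singleton)

lemma Psi_eq_magnon_amp: "Psi n = magnon_amp n 0"
proof
  fix x
  have "Psi n x = (\<Sum>m<n. if x = {..<n} - {m} then omega n ^ m else 0)"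
    unfolding Psi_def sum_distrib_left
  proof (intro sum.cong refl)
    fix m assume m: "m \<in> {..<n}"
    have "(\<lambda>y. sigma_minus m x y * all_ones n y) =
        (\<lambda>y. if y = {..<n} then sigma_minus m x {..<n} else 0)"
      by (auto simp: all_ones_def)
    hence "app n (sigma_minus m) (all_ones n) x = (if x = {..<n} - {m} then 1 else 0)"
      using m unfolding app_def by (simp only:) (simp add: mem_cfg_iff sigma_minus_def)
    moreover have "cnj (omega n) * omega n ^ (m + 1) = omega n ^ m"
      using cnj_omega_mult[of n] by (simp add: mult.assoc[symmetric] mult.commute)
    ultimately show "cnj (omega n) * (omega n ^ (m + 1) * app n (sigma_minus m) (all_ones n) x) =
        (if x = {..<n} - {m} then omega n ^ m else 0)"
      by (simp add: mult.assoc[symmetric])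
  qed
  also have "\<dots> = magnon_amp n 0 x"
  proof (cases "\<exists>m<n. x = {..<n} - {m}")
    case True
    then obtain m0 where m0: "m0 < n" "x = {..<n} - {m0}" by blast
    have "(\<Sum>m<n. if x = {..<n} - {m} then omega n ^ m else 0) =
        (\<Sum>m<n. if m = m0 then omega n ^ m else 0)"
      using m0 by (intro sum.cong refl) auto
    also have "\<dots> = omega n ^ m0" using m0 by simp
    also have "\<dots> = magnon_amp n 0 x"
      using True m0 one_hole_iff[of x n] by (simp add: magnon_amp_def Diff_Diff_Int Int_absorb1)
    finally show ?thesis .
  next
    case False
    hence "\<not> (x \<subseteq> {..<n} \<and> card x + 0 + 1 = n)" using one_hole_iff[of x n] by simp
    thus ?thesis using False by (auto simp: magnon_amp_def)
  qed
  finally show "Psi n x = magnon_amp n 0 x" .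
qed

lemma app_S_minus:
  "app n (S_minus n) v x = (if x \<subseteq> {..<n} then (\<Sum>m\<in>{..<n} - x. v (insert m x)) else 0)"
proof -
  have "app n (S_minus n) v x = (\<Sum>m<n. \<Sum>y\<in>cfg n. sigma_minus m x y * v y)"
    unfolding app_def S_minus_def sum_distrib_right by (rule sum.swap)
  also have "\<dots> = (\<Sum>m<n. if m \<notin> x \<and> x \<subseteq> {..<n} then v (insert m x) else 0)"
  proof (intro sum.cong refl)
    fix m assume "m \<in> {..<n}"
    have "(\<Sum>y\<in>cfg n. sigma_minus m x y * v y) =
        (\<Sum>y\<in>cfg n. if y = insert m x then (if m \<notin> x then v y else 0) else 0)"
      by (intro sum.cong refl) (auto simp: sigma_minus_def)
    also have "\<dots> = (if m \<notin> x \<and> x \<subseteq> {..<n} then v (insert m x) else 0)"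
      using \<open>m \<in> {..<n}\<close> by (auto simp: mem_cfg_iff)
    finally show "(\<Sum>y\<in>cfg n. sigma_minus m x y * v y) =
        (if m \<notin> x \<and> x \<subseteq> {..<n} then v (insert m x) else 0)" .
  qed
  also have "\<dots> = (if x \<subseteq> {..<n} then (\<Sum>m\<in>{..<n} - x. v (insert m x)) else 0)"
    by (simp add: sum.If_cases Diff_eq Compl_eq)
  finally show ?thesis .
qed

lemma app_S_minus_magnon_amp: "app n (S_minus n) (magnon_amp n r) = magnon_amp n (Suc r)"
proof
  fix x
  show "app n (S_minus n) (magnon_amp n r) x = magnon_amp n (Suc r) x"
  proof (cases "x \<subseteq> {..<n} \<and> card x + Suc r + 1 = n")
    case False
    moreover have "card (insert m x) = Suc (card x)" if "m \<notin> x" "x \<subseteq> {..<n}" for m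
      using that finite_subset by fastforce
    ultimately show ?thesis by (auto simp: app_S_minus magnon_amp_def intro!: sum.neutral)
  next
    case True
    let ?Z = "{..<n} - x"
    have fx: "finite x" using True finite_subset by blast
    have cZ: "card ?Z = Suc (Suc r)" using True by (auto simp: card_Diff_subset fx)
    have "app n (S_minus n) (magnon_amp n r) x = (\<Sum>m\<in>?Z. fact r * (\<Sum>m'\<in>?Z - {m}. omega n ^ m'))"
      unfolding app_S_minus using True
    proof (intro if_P[THEN trans] sum.cong refl)
      fix m assume m: "m \<in> ?Z"
      have "{..<n} - insert m x = ?Z - {m}" by auto
      thus "magnon_amp n r (insert m x) = fact r * (\<Sum>m'\<in>?Z - {m}. omega n ^ m')"
        using m True fx by (simp add: magnon_amp_def)
    qed simp
    also have "\<dots> = fact r * (of_nat (card ?Z) * (\<Sum>m\<in>?Z. omega n ^ m) - (\<Sum>m\<in>?Z. omega n ^ m))"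
      by (simp add: sum_diff1 sum_distrib_left[symmetric] sum_subtractf)
    also have "\<dots> = fact (Suc r) * (\<Sum>m\<in>?Z. omega n ^ m)"
      unfolding cZ by (simp add: fact_Suc algebra_simps)
    finally show ?thesis using True by (simp add: magnon_amp_def)
  qed
qed

lemma descendant_eq_magnon_amp: "descendant n r = magnon_amp n r"
  by (induction r) (simp_all add: descendant_def Psi_eq_magnon_amp app_S_minus_magnon_amp)

section \<open>Norms of the descendant states\<close>

lemma sum_omega_powers: "n \<ge> 2 \<Longrightarrow> (\<Sum>m<n. omega n ^ m) = 0"
proof -
  assume n: "n \<ge> 2"
  have pow: "omega n ^ j = exp (2 * complex_of_real pi * \<i> * of_nat j / of_nat n)" for j
    unfolding omega_def exp_of_nat_mult[symmetric] by (simp add: mult_ac)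
  have "omega n ^ 1 \<noteq> 1"
    unfolding pow using n by (subst complex_root_unity_eq_1) auto
  hence "omega n \<noteq> 1" by simp
  moreover have "omega n ^ n = 1"
    unfolding pow using n by (subst complex_root_unity_eq_1) auto
  ultimately show ?thesis by (simp add: geometric_sum)
qed

lemma card_supsets_of_card:
  assumes U: "finite U" and A: "A \<subseteq> U" and k: "card A \<le> k"
  shows "card {Z. Z \<subseteq> U \<and> card Z = k \<and> A \<subseteq> Z} = (card U - card A) choose (k - card A)"
proof -
  have fA: "finite A" using U A finite_subset by blast
  have "bij_betw (\<lambda>Z. Z - A) {Z. Z \<subseteq> U \<and> card Z = k \<and> A \<subseteq> Z} {W. W \<subseteq> U - A \<and> card W = k - card A}"
  proof (rule bij_betw_byWitness[where f' = "\<lambda>W. W \<union> A"])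
    show "\<forall>a\<in>{Z. Z \<subseteq> U \<and> card Z = k \<and> A \<subseteq> Z}. a - A \<union> A = a" by auto
    show "\<forall>a'\<in>{W. W \<subseteq> U - A \<and> card W = k - card A}. a' \<union> A - A = a'" by auto
    show "(\<lambda>Z. Z - A) ` {Z. Z \<subseteq> U \<and> card Z = k \<and> A \<subseteq> Z} \<subseteq> {W. W \<subseteq> U - A \<and> card W = k - card A}"
    proof safe
      fix Z assume "Z \<subseteq> U" "A \<subseteq> Z" "k = card Z"
      thus "card (Z - A) = card Z - card A" using U fA by (simp add: card_Diff_subset finite_subset)
    qed auto
    show "(\<lambda>W. W \<union> A) ` {W. W \<subseteq> U - A \<and> card W = k - card A} \<subseteq> {Z. Z \<subseteq> U \<and> card Z = k \<and> A \<subseteq> Z}"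
    proof safe
      fix W assume W: "W \<subseteq> U - A" "card W = k - card A"
      have fW: "finite W" using W U finite_subset by blast
      have "card (W \<union> A) = card W + card A" using W fW fA by (subst card_Un_disjoint) auto
      thus "card (W \<union> A) = k" using W k by simp
    qed (use A in auto)
  qed
  hence "card {Z. Z \<subseteq> U \<and> card Z = k \<and> A \<subseteq> Z} = card {W. W \<subseteq> U - A \<and> card W = k - card A}"
    by (rule bij_betw_same_card)
  also have "\<dots> = card (U - A) choose (k - card A)" using U by (simp add: n_subsets)
  also have "card (U - A) = card U - card A" using A fA by (simp add: card_Diff_subset)
  finally show ?thesis .
qed

lemma sum_subsets_pair_count:
  fixes f :: "'a \<Rightarrow> 'a \<Rightarrow> 'b :: comm_semiring_1"
  assumes U: "finite U" and T: "\<And>Z. Z \<in> T \<Longrightarrow> Z \<subseteq> U" and fT: "finite T"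
  shows "(\<Sum>Z\<in>T. \<Sum>m\<in>Z. \<Sum>m'\<in>Z. f m m') = (\<Sum>m\<in>U. \<Sum>m'\<in>U. of_nat (card {Z\<in>T. m \<in> Z \<and> m' \<in> Z}) * f m m')"
proof -
  have "(\<Sum>Z\<in>T. \<Sum>m\<in>Z. \<Sum>m'\<in>Z. f m m') = (\<Sum>Z\<in>T. \<Sum>m\<in>U. \<Sum>m'\<in>U. if m \<in> Z \<and> m' \<in> Z then f m m' else 0)"
  proof (rule sum.cong[OF refl])
    fix Z assume Z: "Z \<in> T"
    have restrict: "(\<Sum>x\<in>U. if x \<in> Z then g x else 0) = sum g Z" for g :: "'a \<Rightarrow> 'b"
      using U T[OF Z] by (subst sum.inter_restrict[symmetric]) (auto simp: Int_absorb1)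
    have "(\<Sum>m\<in>U. \<Sum>m'\<in>U. if m \<in> Z \<and> m' \<in> Z then f m m' else 0) = (\<Sum>m\<in>U. if m \<in> Z then (\<Sum>m'\<in>U. if m' \<in> Z then f m m' else 0) else 0)"
      by (intro sum.cong refl) auto
    also have "\<dots> = (\<Sum>m\<in>Z. \<Sum>m'\<in>U. if m' \<in> Z then f m m' else 0)"
      by (rule restrict)
    also have "\<dots> = (\<Sum>m\<in>Z. \<Sum>m'\<in>Z. f m m')"
      by (rule sum.cong[OF refl]) (rule restrict)
    finally show "(\<Sum>m\<in>Z. \<Sum>m'\<in>Z. f m m') = (\<Sum>m\<in>U. \<Sum>m'\<in>U. if m \<in> Z \<and> m' \<in> Z then f m m' else 0)" by simp
  qed
  also have "\<dots> = (\<Sum>m\<in>U. \<Sum>Z\<in>T. \<Sum>m'\<in>U. if m \<in> Z \<and> m' \<in> Z then f m m' else 0)"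
    by (rule sum.swap)
  also have "\<dots> = (\<Sum>m\<in>U. \<Sum>m'\<in>U. \<Sum>Z\<in>T. if m \<in> Z \<and> m' \<in> Z then f m m' else 0)"
    by (rule sum.cong[OF refl]) (rule sum.swap)
  also have "\<dots> = (\<Sum>m\<in>U. \<Sum>m'\<in>U. of_nat (card {Z\<in>T. m \<in> Z \<and> m' \<in> Z}) * f m m')"
  proof (intro sum.cong refl)
    fix m m'
    have "(\<Sum>Z\<in>T. if m \<in> Z \<and> m' \<in> Z then f m m' else 0) = (\<Sum>Z\<in>{Z\<in>T. m \<in> Z \<and> m' \<in> Z}. f m m')"
      by (rule sum.inter_filter[OF fT, symmetric])
    also have "\<dots> = of_nat (card {Z\<in>T. m \<in> Z \<and> m' \<in> Z}) * f m m'" by simp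
    finally show "(\<Sum>Z\<in>T. if m \<in> Z \<and> m' \<in> Z then f m m' else 0) = of_nat (card {Z\<in>T. m \<in> Z \<and> m' \<in> Z}) * f m m'" .
  qed
  finally show ?thesis .
qed

lemma card_subsets_containing_pair:
  assumes m: "m < n" "m' < n"
  shows "card {Z. Z \<subseteq> {..<n} \<and> card Z = r + 1 \<and> m \<in> Z \<and> m' \<in> Z} =
    (if m = m' then (n - 1) choose r else if r = 0 then 0 else (n - 2) choose (r - 1))"
proof -
  let ?A = "{m, m'}"
  have eq: "{Z. Z \<subseteq> {..<n} \<and> card Z = r + 1 \<and> m \<in> Z \<and> m' \<in> Z} =
      {Z. Z \<subseteq> {..<n} \<and> card Z = r + 1 \<and> ?A \<subseteq> Z}"
    by auto
  show ?thesis
  proof (cases "m \<noteq> m' \<and> r = 0")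
    case True
    have "card Z \<noteq> r + 1" if "Z \<subseteq> {..<n}" "?A \<subseteq> Z" for Z
    proof -
      have "card ?A \<le> card Z" using that finite_subset by (intro card_mono) auto
      thus ?thesis using True by simp
    qed
    hence "{Z. Z \<subseteq> {..<n} \<and> card Z = r + 1 \<and> ?A \<subseteq> Z} = {}" by blast
    thus ?thesis using True eq by simp
  next
    case False
    have "card ?A \<le> r + 1" using False by (cases "m = m'") simp_all
    hence "card {Z. Z \<subseteq> {..<n} \<and> card Z = r + 1 \<and> ?A \<subseteq> Z} =
        (n - card ?A) choose (r + 1 - card ?A)"
      using m card_supsets_of_card[of "{..<n}" ?A "r + 1"] by simp
    thus ?thesis using False eq by (cases "m = m'") (simp_all add: numeral_2_eq_2)
  qed
qed

lemma binomial_pred_pascal: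
  assumes "n \<ge> 2"
  shows "((n - 1) choose r) = (if r = 0 then 0 else (n - 2) choose (r - 1)) + ((n - 2) choose r)"
proof (cases r)
  case 0 thus ?thesis by simp
next
  case (Suc k)
  have "n - 1 = Suc (n - 2)" using assms by simp
  thus ?thesis using Suc by (simp only: binomial_Suc_Suc) simp
qed

lemma binomial_pred_le_double:
  assumes n: "n \<ge> 2" and r: "2 * r + 1 \<le> n"
  shows "(n - 1) choose r \<le> 2 * ((n - 2) choose r)"
proof -
  have h: "(n - 1 - r) * ((n - 1) choose r) = (n - 1) * ((n - 2) choose r)"
    using binomial_absorb_comp[of "n - 1" r] by (simp add: diff_diff_add numeral_2_eq_2)
  have "(n - 1) * ((n - 1) choose r) \<le> (2 * (n - 1 - r)) * ((n - 1) choose r)"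
    using r by (intro mult_right_mono) auto
  also have "\<dots> = (n - 1) * (2 * ((n - 2) choose r))" using h by simp
  finally show ?thesis using n by simp
qed

text \<open>Expanding the squares, a pair \<open>m \<noteq> m'\<close> lies in \<open>C(n-2, r-1)\<close> of the sets and a
  diagonal pair \<open>m = m'\<close> in \<open>C(n-1, r)\<close>; since the \<open>n\<close>-th roots of unity sum to zero,
  only the diagonal excess \<open>C(n-1, r) - C(n-2, r-1) = C(n-2, r)\<close> survives.\<close>

lemma sum_subsets_norm_omega_power2:
  assumes n: "n \<ge> 2" and r: "r + 2 \<le> n"
  shows "(\<Sum>Z\<in>{Z. Z \<subseteq> {..<n} \<and> card Z = r + 1}. (cmod (\<Sum>m\<in>Z. omega n ^ m))\<^sup>2) = real n * real ((n - 2) choose r)"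
proof -
  let ?T = "{Z. Z \<subseteq> {..<n} \<and> card Z = r + 1}"
  let ?f = "\<lambda>m m'. omega n ^ m * cnj (omega n ^ m')"
  let ?c1 = "(n - 1) choose r" and ?c2 = "if r = 0 then 0 else (n - 2) choose (r - 1)"
  have fT: "finite ?T" by (rule finite_subset[of _ "Pow {..<n}"]) auto
  have "complex_of_real (\<Sum>Z\<in>?T. (cmod (\<Sum>m\<in>Z. omega n ^ m))\<^sup>2) = (\<Sum>Z\<in>?T. \<Sum>m\<in>Z. \<Sum>m'\<in>Z. ?f m m')"
    unfolding of_real_sum
  proof (rule sum.cong[OF refl])
    fix Z
    show "complex_of_real ((cmod (\<Sum>m\<in>Z. omega n ^ m))\<^sup>2) = (\<Sum>m\<in>Z. \<Sum>m'\<in>Z. ?f m m')"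
      by (simp only: complex_norm_square cnj_sum sum_product)
  qed
  also have "\<dots> = (\<Sum>m<n. \<Sum>m'<n. of_nat (card {Z\<in>?T. m \<in> Z \<and> m' \<in> Z}) * ?f m m')"
    by (rule sum_subsets_pair_count) (use fT in auto)
  also have "\<dots> = (\<Sum>m<n. \<Sum>m'<n. (of_nat ?c2 + (if m' = m then of_nat ?c1 - of_nat ?c2 else 0)) * ?f m m')"
  proof (intro sum.cong refl)
    fix m m' assume "m \<in> {..<n}" "m' \<in> {..<n}"
    thus "of_nat (card {Z\<in>?T. m \<in> Z \<and> m' \<in> Z}) * ?f m m' = (of_nat ?c2 + (if m' = m then of_nat ?c1 - of_nat ?c2 else 0)) * ?f m m'"
      using card_subsets_containing_pair[of m n m' r] by (auto simp: conj_assoc)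
  qed
  also have "\<dots> = of_nat ?c2 * (\<Sum>m<n. \<Sum>m'<n. ?f m m') + (of_nat ?c1 - of_nat ?c2) * (\<Sum>m<n. ?f m m)"
    by (simp add: distrib_right sum.distrib sum_distrib_left if_distrib[where f = "\<lambda>z. z * _"] cong: if_cong)
  also have "(\<Sum>m<n. \<Sum>m'<n. ?f m m') = (\<Sum>m<n. omega n ^ m) * cnj (\<Sum>m<n. omega n ^ m)"
    by (simp only: cnj_sum sum_product)
  also have "\<dots> = 0" using sum_omega_powers[OF n] by simp
  also have "(\<Sum>m<n. ?f m m) = of_nat n"
  proof -
    have "?f m m = 1" for m
      using cnj_omega_mult[of n] by (simp add: power_mult_distrib[symmetric] mult.commute)
    thus ?thesis by simp
  qed
  also have "(of_nat ?c1 - of_nat ?c2 :: complex) = of_nat ((n - 2) choose r)"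
    using binomial_pred_pascal[OF n, of r] by simp
  finally have "complex_of_real (\<Sum>Z\<in>?T. (cmod (\<Sum>m\<in>Z. omega n ^ m))\<^sup>2) = complex_of_real (real n * real ((n - 2) choose r))"
    by simp
  thus ?thesis by (simp only: of_real_eq_iff)
qed


lemma norm_magnon_amp_power2:
  "x \<in> cfg n \<Longrightarrow> (cmod (magnon_amp n r x))\<^sup>2 = (if card x + r + 1 = n then (fact r)\<^sup>2 * (cmod (\<Sum>m\<in>{..<n} - x. omega n ^ m))\<^sup>2 else 0)"
  by (simp add: magnon_amp_def mem_cfg_iff norm_mult norm_fact power_mult_distrib)

lemma sqnorm_magnon_amp:
  assumes n: "n \<ge> 2" and r: "r + 2 \<le> n"
  shows "sqnorm_q n (magnon_amp n r) = (fact r)\<^sup>2 * (real n * real ((n - 2) choose r))"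
proof -
  let ?U = "{..<n}"
  let ?X = "{x \<in> cfg n. card x + r + 1 = n}"
  let ?T = "{Z. Z \<subseteq> ?U \<and> card Z = r + 1}"
  let ?g = "\<lambda>Z. (cmod (\<Sum>m\<in>Z. omega n ^ m))\<^sup>2"
  have "sqnorm_q n (magnon_amp n r) = (\<Sum>x\<in>cfg n. if card x + r + 1 = n then (fact r)\<^sup>2 * ?g (?U - x) else 0)"
    unfolding sqnorm_q_def by (intro sum.cong refl) (simp add: norm_magnon_amp_power2)
  also have "\<dots> = (\<Sum>x\<in>?X. (fact r)\<^sup>2 * ?g (?U - x))"
    by (rule sum.inter_filter[symmetric]) simp
  also have "\<dots> = (fact r)\<^sup>2 * (\<Sum>x\<in>?X. ?g (?U - x))"
    by (simp add: sum_distrib_left)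
  also have "(\<Sum>x\<in>?X. ?g (?U - x)) = sum ?g ?T"
  proof (rule sum.reindex_bij_betw)
    show "bij_betw (\<lambda>x. ?U - x) ?X ?T"
    proof (rule bij_betw_byWitness[where f' = "\<lambda>x. ?U - x"])
      show "\<forall>a\<in>?X. ?U - (?U - a) = a" by (auto simp: mem_cfg_iff)
      show "\<forall>a\<in>?T. ?U - (?U - a) = a" by auto
      show "(\<lambda>x. ?U - x) ` ?X \<subseteq> ?T"
      proof (rule image_subsetI)
        fix x assume "x \<in> ?X"
        hence x: "x \<in> cfg n" "card x + r + 1 = n" by auto
        have "card (?U - x) = n - card x" using x by (simp add: card_Diff_subset mem_cfg_iff finite_subset)
        hence "card (?U - x) = r + 1" using x by simp
        thus "?U - x \<in> ?T" by auto
      qed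
      show "(\<lambda>x. ?U - x) ` ?T \<subseteq> ?X"
      proof (rule image_subsetI)
        fix Z assume "Z \<in> ?T"
        hence Z: "Z \<subseteq> ?U" "card Z = r + 1" by auto
        have "?U - Z \<in> cfg n" by (simp add: mem_cfg_iff)
        moreover have "card (?U - Z) = n - card Z" using Z by (simp add: card_Diff_subset finite_subset)
        ultimately show "?U - Z \<in> ?X" using Z r by simp
      qed
    qed
  qed
  also have "sum ?g ?T = real n * real ((n - 2) choose r)" by (rule sum_subsets_norm_omega_power2[OF n r])
  finally show ?thesis .
qed

lemma norm_magnon_amp_le:
  "cmod (magnon_amp n r x) \<le> fact r * real (r + 1)"
proof (cases "x \<subseteq> {..<n} \<and> card x + r + 1 = n")
  case True
  have "cmod (\<Sum>m\<in>{..<n} - x. omega n ^ m) \<le> (\<Sum>m\<in>{..<n} - x. cmod (omega n ^ m))"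
    by (rule norm_sum)
  also have "\<dots> = real (card ({..<n} - x))" by (simp add: norm_power norm_omega)
  also have "card ({..<n} - x) = r + 1"
  proof -
    have "finite x" using True finite_subset by blast
    moreover have "card x + r + 1 = n" using True by blast
    moreover have "card ({..<n} - x) = n - card x" using True \<open>finite x\<close> by (simp add: card_Diff_subset)
    ultimately show ?thesis by linarith
  qed
  finally show ?thesis using True by (simp add: magnon_amp_def norm_mult norm_fact mult_left_mono)
qed (auto simp: magnon_amp_def)

lemma card_cfg_avoiding:
  assumes j: "j < n"
  shows "card {x \<in> cfg n. j \<notin> x \<and> card x + r + 1 = n} \<le> (n - 1) choose r"
proof (cases "r + 1 \<le> n")
  case False
  hence "{x \<in> cfg n. j \<notin> x \<and> card x + r + 1 = n} = {}" by auto
  thus ?thesis by (metis card.empty zero_le)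
next
  case True
  have "{x \<in> cfg n. j \<notin> x \<and> card x + r + 1 = n} = {x. x \<subseteq> {..<n} - {j} \<and> card x = (n - 1) - r}"
    using True by (auto simp: mem_cfg_iff)
  also have "card \<dots> = card ({..<n} - {j}) choose ((n - 1) - r)" by (simp add: n_subsets)
  also have "\<dots> = (n - 1) choose ((n - 1) - r)" using j by simp
  also have "\<dots> = (n - 1) choose r"
  proof -
    have "r \<le> n - 1" using True by simp
    hence "(n - 1) choose r = (n - 1) choose ((n - 1) - r)" by (rule binomial_symmetric)
    thus ?thesis by simp
  qed
  finally show ?thesis by simp
qed

lemma sqnorm_unfilled_part_le:
  assumes "finite S"
  shows "sqnorm_q n (unfilled_part S u) \<le> (\<Sum>j\<in>S. \<Sum>x\<in>cfg n. if j \<notin> x then (cmod (u x))\<^sup>2 else 0)"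
proof -
  have "sqnorm_q n (unfilled_part S u) = (\<Sum>x\<in>cfg n. if S \<subseteq> x then 0 else (cmod (u x))\<^sup>2)"
    unfolding sqnorm_q_def unfilled_part_def by (intro sum.cong refl) auto
  also have "\<dots> \<le> (\<Sum>x\<in>cfg n. \<Sum>j\<in>S. if j \<notin> x then (cmod (u x))\<^sup>2 else 0)"
  proof (rule sum_mono)
    fix x
    show "(if S \<subseteq> x then 0 else (cmod (u x))\<^sup>2) \<le> (\<Sum>j\<in>S. if j \<notin> x then (cmod (u x))\<^sup>2 else 0)"
    proof (cases "S \<subseteq> x")
      case False
      then obtain j where j: "j \<in> S" "j \<notin> x" by blast
      have "(cmod (u x))\<^sup>2 = (if j \<notin> x then (cmod (u x))\<^sup>2 else 0)" using j by simp
      also have "\<dots> \<le> (\<Sum>j\<in>S. if j \<notin> x then (cmod (u x))\<^sup>2 else 0)"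
        by (rule member_le_sum[OF j(1)]) (simp_all add: assms)
      finally show ?thesis using False by simp
    qed (simp add: sum_nonneg)
  qed
  also have "\<dots> = (\<Sum>j\<in>S. \<Sum>x\<in>cfg n. if j \<notin> x then (cmod (u x))\<^sup>2 else 0)"
    by (rule sum.swap)
  finally show ?thesis .
qed

lemma sqnorm_unfilled_magnon_amp_le:
  assumes S: "S \<subseteq> {..<n}" "card S = d"
  shows "sqnorm_q n (unfilled_part S (magnon_amp n r)) \<le>
           real d * ((fact r * real (r + 1))\<^sup>2 * real ((n - 1) choose r))"
proof -
  let ?a = "\<lambda>x. (cmod (magnon_amp n r x))\<^sup>2"
  let ?M = "(fact r * real (r + 1))\<^sup>2"
  have "sqnorm_q n (unfilled_part S (magnon_amp n r)) \<le> (\<Sum>j\<in>S. \<Sum>x\<in>cfg n. if j \<notin> x then ?a x else 0)"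
    using S finite_subset by (intro sqnorm_unfilled_part_le) blast
  also have "\<dots> \<le> (\<Sum>j\<in>S. ?M * real ((n - 1) choose r))"
  proof (rule sum_mono)
    fix j assume "j \<in> S"
    hence j: "j < n" using S by auto
    have "(\<Sum>x\<in>cfg n. if j \<notin> x then ?a x else 0) \<le>
        (\<Sum>x\<in>cfg n. if j \<notin> x \<and> card x + r + 1 = n then ?M else 0)"
    proof (rule sum_mono)
      fix x
      have "?a x \<le> ?M"
        using norm_magnon_amp_le[of n r x] by (intro power_mono) auto
      moreover have "card x + r + 1 \<noteq> n \<Longrightarrow> ?a x = 0"
        using card_magnon_amp_support[of n r x] by auto
      ultimately show "(if j \<notin> x then ?a x else 0) \<le> (if j \<notin> x \<and> card x + r + 1 = n then ?M else 0)"
        by auto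
    qed
    also have "\<dots> = ?M * real (card {x \<in> cfg n. j \<notin> x \<and> card x + r + 1 = n})"
      by (simp add: sum.inter_filter[symmetric])
    also have "\<dots> \<le> ?M * real ((n - 1) choose r)"
      using card_cfg_avoiding[OF j, of r] by (intro mult_left_mono) auto
    finally show "(\<Sum>x\<in>cfg n. if j \<notin> x then ?a x else 0) \<le> ?M * real ((n - 1) choose r)" .
  qed
  also have "\<dots> = real d * (?M * real ((n - 1) choose r))" using S by simp
  finally show ?thesis .
qed

lemma inner_q_magnon_amp:
  "inner_q n (magnon_amp n r) (magnon_amp n s) = (if r = s then complex_of_real (sqnorm_q n (magnon_amp n r)) else 0)"
proof (cases "r = s")
  case True thus ?thesis by (simp add: inner_q_self)
next
  case False
  have z: "\<forall>x. cnj (magnon_amp n r x) * magnon_amp n s x = 0"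
    using card_magnon_amp_support[of n r] card_magnon_amp_support[of n s] False by fastforce
  have "inner_q n (magnon_amp n r) (magnon_amp n s) = 0"
    unfolding inner_q_def by (rule sum.neutral) (use z in blast)
  thus ?thesis using False by simp
qed
section \<open>Approximate error detection from almost scalar matrix elements\<close>

definition proj_q :: "nat \<Rightarrow> (nat \<Rightarrow> qvec) \<Rightarrow> qop" where
  "proj_q N b = (\<lambda>x y. \<Sum>i<N. ketbra (b i) (b i) x y)"

lemma adj_q_proj_q: "adj_q (proj_q N b) = proj_q N b"
  unfolding proj_q_def adj_q_def ketbra_def by (simp add: cnj_sum mult.commute)

lemma app_proj_q: "app n (proj_q N b) v = (\<lambda>x. \<Sum>i<N. inner_q n (b i) v * b i x)"
  using app_sum_op[where a = "\<lambda>_. 1" and F = "\<lambda>i. ketbra (b i) (b i)"]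
  by (simp add: proj_q_def app_ketbra mult.commute)

lemma Re_trace_proj_q_channel:
  "Re (trace_q n (mult_q n (proj_q N b) (channel n m p K (ketbra \<Phi> \<Phi>)))) =
     (\<Sum>j<m. p j * (\<Sum>i<N. (cmod (inner_q n (b i) (app n (K j) \<Phi>)))\<^sup>2))"
proof -
  have "inner_q n \<phi> (app n (proj_q N b) \<phi>) = complex_of_real (\<Sum>i<N. (cmod (inner_q n (b i) \<phi>))\<^sup>2)"
    for \<phi>
    unfolding app_proj_q inner_q_sum_right of_real_sum
    by (intro sum.cong refl) (simp add: cmod_power2_eq inner_q_commute[of n \<phi>])
  thus ?thesis
    unfolding channel_ketbra mult_q_sum_right trace_q_sum mult_q_ketbra_left trace_q_ketbra
    by (simp add: of_real_sum)
qed

lemma inner_proj_q_channel_proj_q: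
  "inner_q n \<Phi> (app n (\<lambda>x y. mult_q n (mult_q n (proj_q N b) (channel n m p K (ketbra \<Phi> \<Phi>)))
       (proj_q N b) x y / c) \<Phi>) =
     complex_of_real (\<Sum>j<m. p j * (cmod (\<Sum>i<N. inner_q n (b i) (app n (K j) \<Phi>) * inner_q n \<Phi> (b i)))\<^sup>2) / c"
proof -
  let ?P = "proj_q N b"
  let ?\<psi> = "\<lambda>j. app n ?P (app n (K j) \<Phi>)"
  let ?a = "\<lambda>j. \<Sum>i<N. inner_q n (b i) (app n (K j) \<Phi>) * inner_q n \<Phi> (b i)"
  have a: "inner_q n \<Phi> (?\<psi> j) = ?a j" for j
    unfolding app_proj_q inner_q_sum_right by (simp add: mult.commute)
  have "mult_q n (mult_q n ?P (channel n m p K (ketbra \<Phi> \<Phi>))) ?P =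
      (\<lambda>x y. \<Sum>j<m. complex_of_real (p j) * ketbra (?\<psi> j) (?\<psi> j) x y)"
    unfolding channel_ketbra mult_q_sum_right mult_q_ketbra_left mult_q_sum_left mult_q_ketbra_right
      adj_q_proj_q ..
  hence "app n (mult_q n (mult_q n ?P (channel n m p K (ketbra \<Phi> \<Phi>))) ?P) \<Phi> =
      (\<lambda>x. \<Sum>j<m. (complex_of_real (p j) * cnj (?a j)) * ?\<psi> j x)"
    using a inner_q_commute[of n "?\<psi> _" \<Phi>]
    by (simp add: app_sum_op app_ketbra mult_ac)
  moreover have "(\<Sum>j<m. (complex_of_real (p j) * cnj (?a j)) * ?a j) =
      complex_of_real (\<Sum>j<m. p j * (cmod (?a j))\<^sup>2)"
    unfolding of_real_sum by (intro sum.cong refl) (simp add: cmod_power2_eq mult_ac)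
  ultimately show ?thesis
    unfolding app_divide_op inner_q_divide_right by (simp add: inner_q_sum_right a)
qed

text \<open>The left-hand side is the squared distance of \<open>w\<close> from the line spanned by the unit
  vector \<open>c\<close>, hence it is at most the distance from any point \<open>\<mu> c\<close> of that line.\<close>

lemma sum_norm_power2_sub_projection_le:
  fixes c w :: "nat \<Rightarrow> complex"
  assumes c1: "(\<Sum>i<N. (cmod (c i))\<^sup>2) = 1"
  shows "(\<Sum>i<N. (cmod (w i))\<^sup>2) - (cmod (\<Sum>i<N. w i * cnj (c i)))\<^sup>2 \<le>
           (\<Sum>i<N. (cmod (w i - \<mu> * c i))\<^sup>2)"
proof -
  let ?a = "\<Sum>i<N. w i * cnj (c i)"
  have cc: "(\<Sum>i<N. c i * cnj (c i)) = 1"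
    using arg_cong[OF c1, of complex_of_real] by (simp add: of_real_sum cmod_power2_eq)
  have ca: "(\<Sum>i<N. c i * cnj (w i)) = cnj ?a"
    by (simp add: cnj_sum mult.commute)
  have "complex_of_real (\<Sum>i<N. (cmod (w i - \<mu> * c i))\<^sup>2) =
      (\<Sum>i<N. (w i - \<mu> * c i) * cnj (w i - \<mu> * c i))"
    by (simp add: of_real_sum cmod_power2_eq)
  also have "\<dots> = (\<Sum>i<N. w i * cnj (w i)) - cnj \<mu> * ?a - \<mu> * (\<Sum>i<N. c i * cnj (w i)) +
      \<mu> * cnj \<mu> * (\<Sum>i<N. c i * cnj (c i))"
    by (simp add: algebra_simps sum.distrib sum_subtractf sum_distrib_left)
  also have "\<dots> = (\<Sum>i<N. w i * cnj (w i)) - ?a * cnj ?a + (\<mu> - ?a) * cnj (\<mu> - ?a)"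
    unfolding ca cc by (simp add: algebra_simps)
  also have "\<dots> = complex_of_real ((\<Sum>i<N. (cmod (w i))\<^sup>2) - (cmod ?a)\<^sup>2 + (cmod (\<mu> - ?a))\<^sup>2)"
    by (simp add: of_real_sum cmod_power2_eq)
  finally have "(\<Sum>i<N. (cmod (w i - \<mu> * c i))\<^sup>2) =
      (\<Sum>i<N. (cmod (w i))\<^sup>2) - (cmod ?a)\<^sup>2 + (cmod (\<mu> - ?a))\<^sup>2"
    by (simp only: of_real_eq_iff)
  thus ?thesis by simp
qed

lemma leakage_le_of_near_scalar:
  fixes b :: "nat \<Rightarrow> qvec" and c :: "nat \<Rightarrow> complex"
  assumes near: "\<And>i l. i < N \<Longrightarrow> l < N \<Longrightarrow>
      cmod (inner_q n (b i) (app n F (b l)) - \<mu> * (if i = l then 1 else 0)) \<le> \<eta>"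
    and c1: "(\<Sum>i<N. (cmod (c i))\<^sup>2) = 1"
  shows "(\<Sum>i<N. (cmod (inner_q n (b i) (app n F (\<lambda>x. \<Sum>l<N. c l * b l x))))\<^sup>2)
         - (cmod (\<Sum>i<N. inner_q n (b i) (app n F (\<lambda>x. \<Sum>l<N. c l * b l x)) * cnj (c i)))\<^sup>2
         \<le> real N ^ 3 * \<eta>\<^sup>2"
proof -
  let ?M = "\<lambda>i l. inner_q n (b i) (app n F (b l)) - \<mu> * (if i = l then 1 else 0)"
  let ?w = "\<lambda>i. inner_q n (b i) (app n F (\<lambda>x. \<Sum>l<N. c l * b l x))"
  have "(\<Sum>i<N. (cmod (?w i))\<^sup>2) - (cmod (\<Sum>i<N. ?w i * cnj (c i)))\<^sup>2 \<le>
      (\<Sum>i<N. (cmod (?w i - \<mu> * c i))\<^sup>2)"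
    by (rule sum_norm_power2_sub_projection_le[OF c1])
  also have "\<dots> \<le> (\<Sum>i<N. (real N * \<eta>)\<^sup>2)"
  proof (intro sum_mono power_mono)
    fix i assume "i \<in> {..<N}"
    hence "(\<Sum>l<N. c l * (\<mu> * (if i = l then 1 else 0))) = \<mu> * c i"
      by (simp add: if_distrib cong: if_cong)
    hence "?w i - \<mu> * c i = (\<Sum>l<N. c l * ?M i l)"
      by (simp add: app_sum inner_q_sum_right algebra_simps sum_subtractf)
    also have "cmod \<dots> \<le> (\<Sum>l<N. cmod (c l * ?M i l))"
      by (rule norm_sum)
    also have "\<dots> \<le> (\<Sum>l<N. 1 * \<eta>)"
    proof (rule sum_mono)
      fix l assume "l \<in> {..<N}"
      have "cmod (c l) \<le> 1"
        using c1 \<open>l \<in> {..<N}\<close> by (intro cmod_le_one_of_sum_power2[of "{..<N}"]) auto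
      moreover have "cmod (?M i l) \<le> \<eta>" using near \<open>i \<in> {..<N}\<close> \<open>l \<in> {..<N}\<close> by simp
      ultimately show "cmod (c l * ?M i l) \<le> 1 * \<eta>"
        unfolding norm_mult using norm_ge_zero[of "?M i l"] by (intro mult_mono) auto
    qed
    finally show "cmod (?w i - \<mu> * c i) \<le> real N * \<eta>" by simp
  qed simp
  also have "\<dots> = real N ^ 3 * \<eta>\<^sup>2" by (simp add: power2_eq_square power3_eq_cube)
  finally show ?thesis .
qed

lemma inner_q_orthonormal_expansion:
  fixes b :: "nat \<Rightarrow> qvec"
  assumes orth: "\<forall>i<N. \<forall>j<N. inner_q n (b i) (b j) = (if i = j then 1 else 0)" and i: "i < N"
  shows "inner_q n (b i) (\<lambda>x. \<Sum>l<N. c l * b l x) = c i"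
proof -
  have "inner_q n (b i) (\<lambda>x. \<Sum>l<N. c l * b l x) = (\<Sum>l<N. if l = i then c l else 0)"
    unfolding inner_q_sum_right using orth i by (intro sum.cong refl) auto
  also have "\<dots> = c i" using i by simp
  finally show ?thesis .
qed

lemma sqnorm_q_orthonormal_expansion:
  fixes b :: "nat \<Rightarrow> qvec"
  assumes orth: "\<forall>i<N. \<forall>j<N. inner_q n (b i) (b j) = (if i = j then 1 else 0)"
  shows "sqnorm_q n (\<lambda>x. \<Sum>i<N. c i * b i x) = (\<Sum>i<N. (cmod (c i))\<^sup>2)"
proof -
  have "complex_of_real (sqnorm_q n (\<lambda>x. \<Sum>i<N. c i * b i x)) =
      (\<Sum>i<N. cnj (c i) * inner_q n (b i) (\<lambda>x. \<Sum>l<N. c l * b l x))"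
    unfolding inner_q_self[symmetric] by (rule inner_q_sum_left)
  also have "\<dots> = complex_of_real (\<Sum>i<N. (cmod (c i))\<^sup>2)"
    unfolding of_real_sum using orth
    by (intro sum.cong refl) (simp add: inner_q_orthonormal_expansion cmod_power2_eq mult.commute)
  finally show ?thesis by (simp only: of_real_eq_iff)
qed

text \<open>The fidelity of the detected state is \<open>F / t\<close> with \<open>F = \<Sum>\<^sub>j p\<^sub>j |\<langle>\<Phi>, P K\<^sub>j \<Phi>\<rangle>|^2\<close>, and
  \<open>t - F \<le> N^3 \<eta>^2 \<le> \<epsilon> \<delta> \<le> \<epsilon> t\<close>.\<close>

lemma approx_detect_of_near_scalar:
  fixes b :: "nat \<Rightarrow> qvec"
  assumes orth: "\<forall>i<N. \<forall>j<N. inner_q n (b i) (b j) = (if i = j then 1 else 0)"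
    and near: "\<And>F i l. local_op n d F \<Longrightarrow> op_norm n F \<le> 1 \<Longrightarrow> i < N \<Longrightarrow> l < N \<Longrightarrow>
        cmod (inner_q n (b i) (app n F (b l)) - F {..<n} {..<n} * (if i = l then 1 else 0)) \<le> \<eta>"
    and \<eta>: "real N ^ 3 * \<eta>\<^sup>2 \<le> eps * delta" and delta: "delta > 0"
    and adm: "admissible_noise n d m p K"
  shows "approx_detect n eps delta {v. \<exists>c. v = (\<lambda>x. \<Sum>i<N. c i * b i x)} (proj_q N b)
           (channel n m p K)"
  unfolding approx_detect_def Let_def
proof (intro ballI impI)
  fix \<Phi> assume "\<Phi> \<in> {v. \<exists>c. v = (\<lambda>x. \<Sum>i<N. c i * b i x)}" and \<Phi>1: "vnorm n \<Phi> = 1"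
  then obtain c where \<Phi>: "\<Phi> = (\<lambda>x. \<Sum>i<N. c i * b i x)" by blast
  let ?t = "Re (trace_q n (mult_q n (proj_q N b) (channel n m p K (ketbra \<Phi> \<Phi>))))"
  let ?T = "\<lambda>j. \<Sum>i<N. (cmod (inner_q n (b i) (app n (K j) \<Phi>)))\<^sup>2"
  let ?a = "\<lambda>j. \<Sum>i<N. inner_q n (b i) (app n (K j) \<Phi>) * cnj (c i)"
  let ?F = "\<Sum>j<m. p j * (cmod (?a j))\<^sup>2"
  assume t: "delta \<le> ?t"
  have p: "\<forall>j<m. p j \<ge> 0" "(\<Sum>j<m. p j) = 1"
    and K: "\<forall>j<m. local_op n d (K j) \<and> op_norm n (K j) \<le> 1"
    using adm unfolding admissible_noise_def by auto
  have c1: "(\<Sum>i<N. (cmod (c i))\<^sup>2) = 1"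
    using \<Phi>1 sqnorm_q_orthonormal_expansion[OF orth, of c] by (simp add: \<Phi> vnorm_eq_sqrt_sqnorm_q)
  have eps: "eps \<ge> 0"
    using \<eta> delta by (smt (verit) zero_le_mult_iff zero_le_power zero_le_power2 of_nat_0_le_iff)
  have "?t - ?F = (\<Sum>j<m. p j * (?T j - (cmod (?a j))\<^sup>2))"
    unfolding Re_trace_proj_q_channel by (simp add: sum_subtractf algebra_simps)
  also have "\<dots> \<le> (\<Sum>j<m. p j * (real N ^ 3 * \<eta>\<^sup>2))"
  proof (intro sum_mono mult_left_mono)
    fix j assume "j \<in> {..<m}"
    thus "?T j - (cmod (?a j))\<^sup>2 \<le> real N ^ 3 * \<eta>\<^sup>2"
      unfolding \<Phi> using K by (intro leakage_le_of_near_scalar[OF near c1]) auto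
  qed (use p in auto)
  also have "\<dots> = real N ^ 3 * \<eta>\<^sup>2" using p by (simp add: sum_distrib_right[symmetric])
  also have "\<dots> \<le> eps * ?t" using \<eta> t eps by (meson mult_left_mono order_trans)
  finally have "(1 - eps) * ?t \<le> ?F" by (simp add: algebra_simps)
  hence "1 - eps \<le> ?F / ?t" using t delta by (simp add: pos_le_divide_eq)
  moreover have "inner_q n \<Phi> (b i) = cnj (c i)" if "i < N" for i
    using inner_q_orthonormal_expansion[OF orth that, of c] inner_q_commute[of n \<Phi> "b i"]
    by (simp add: \<Phi>)
  ultimately show "1 - eps \<le> Re (inner_q n \<Phi> (app n (\<lambda>x y. mult_q n (mult_q n (proj_q N b)
      (channel n m p K (ketbra \<Phi> \<Phi>))) (proj_q N b) x y / complex_of_real ?t) \<Phi>))"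
    unfolding inner_proj_q_channel_proj_q
    by (simp add: of_real_divide[symmetric] del: of_real_divide)
qed

section \<open>The code spanned by the even descendants\<close>

definition code_vec :: "nat \<Rightarrow> nat \<Rightarrow> qvec" where
  "code_vec n r = (\<lambda>x. complex_of_real (1 / vnorm n (magnon_amp n r)) * magnon_amp n r x)"

lemma vnorm_magnon_amp_pos:
  assumes "n \<ge> 2" "r + 2 \<le> n"
  shows "vnorm n (magnon_amp n r) > 0"
proof -
  have "(n - 2) choose r > 0" using assms by (intro zero_less_binomial) linarith
  thus ?thesis
    using assms by (simp add: vnorm_eq_sqrt_sqnorm_q sqnorm_magnon_amp)
qed

lemma code_vec_outside_cfg: "x \<notin> cfg n \<Longrightarrow> code_vec n r x = 0"
  by (simp add: code_vec_def magnon_amp_outside_cfg)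

lemma inner_q_code_vec:
  assumes "n \<ge> 2" "r + 2 \<le> n"
  shows "inner_q n (code_vec n r) (code_vec n s) = (if r = s then 1 else 0)"
proof (cases "r = s")
  case True
  have "vnorm n (magnon_amp n r) > 0" by (rule vnorm_magnon_amp_pos[OF assms])
  thus ?thesis
    using True unfolding code_vec_def inner_q_scale_left inner_q_scale_right inner_q_magnon_amp
      vnorm_power2[symmetric]
    by (simp add: field_simps power2_eq_square)
next
  case False
  thus ?thesis
    unfolding code_vec_def inner_q_scale_left inner_q_scale_right inner_q_magnon_amp by simp
qed

lemma vnorm_code_vec: "n \<ge> 2 \<Longrightarrow> r + 2 \<le> n \<Longrightarrow> vnorm n (code_vec n r) = 1"
  using vnorm_magnon_amp_pos[of n r] unfolding code_vec_def vnorm_scale by (simp add: norm_divide)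

lemma vnorm_unfilled_code_vec_le:
  assumes n: "n \<ge> 2" and r: "2 * r + 1 \<le> n" and S: "S \<subseteq> {..<n}" "card S = d"
  shows "vnorm n (unfilled_part S (code_vec n r)) \<le> sqrt (2 * real d * (real (r + 1))\<^sup>2 / real n)"
proof -
  let ?C = "real ((n - 2) choose r)"
  have C: "?C > 0" using r by (simp add: zero_less_binomial)
  have D: "sqnorm_q n (magnon_amp n r) = (fact r)\<^sup>2 * (real n * ?C)"
    using n r by (intro sqnorm_magnon_amp) auto
  have "sqnorm_q n (unfilled_part S (code_vec n r)) =
      sqnorm_q n (unfilled_part S (magnon_amp n r)) / sqnorm_q n (magnon_amp n r)"
    unfolding code_vec_def unfilled_part_scale sqnorm_q_scale vnorm_power2[symmetric]
    by (simp add: norm_divide power_divide)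
  also have "\<dots> \<le> real d * ((fact r * real (r + 1))\<^sup>2 * real ((n - 1) choose r)) /
      ((fact r)\<^sup>2 * (real n * ?C))"
    unfolding D using n C by (intro divide_right_mono sqnorm_unfilled_magnon_amp_le S) auto
  also have "\<dots> = real d * (real (r + 1))\<^sup>2 * real ((n - 1) choose r) / (real n * ?C)"
    by (simp add: power_mult_distrib)
  also have "\<dots> \<le> real d * (real (r + 1))\<^sup>2 * (2 * ?C) / (real n * ?C)"
    using binomial_pred_le_double[OF n r] n C by (intro divide_right_mono mult_left_mono) auto
  also have "\<dots> = 2 * real d * (real (r + 1))\<^sup>2 / real n"
    using C by (simp add: field_simps)
  finally show ?thesis unfolding vnorm_eq_sqrt_sqnorm_q by (rule real_sqrt_le_mono)
qed

lemma desc_span_even_eq: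
  assumes n: "n \<ge> 2" and N: "4 * N \<le> n"
  shows "desc_span n ((\<lambda>i. 2 * i) ` {..<N}) =
           {v. \<exists>c. v = (\<lambda>x. \<Sum>i<N. c i * code_vec n (2 * i) x)}"
proof -
  let ?s = "\<lambda>i. vnorm n (magnon_amp n (2 * i))"
  have s: "?s i \<noteq> 0" if "i < N" for i
    using that n N vnorm_magnon_amp_pos[of n "2 * i"] by simp
  have reindex: "(\<Sum>r\<in>(\<lambda>i. 2 * i) ` {..<N}. c r * descendant n r x) =
      (\<Sum>i<N. c (2 * i) * magnon_amp n (2 * i) x)" for c x
    by (subst sum.reindex) (auto simp: inj_on_def descendant_eq_magnon_amp)
  have "(\<exists>c. v = (\<lambda>x. \<Sum>i<N. c (2 * i) * magnon_amp n (2 * i) x)) \<longleftrightarrow>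
      (\<exists>c. v = (\<lambda>x. \<Sum>i<N. c i * code_vec n (2 * i) x))" for v
  proof
    assume "\<exists>c. v = (\<lambda>x. \<Sum>i<N. c (2 * i) * magnon_amp n (2 * i) x)"
    then obtain c where "v = (\<lambda>x. \<Sum>i<N. c (2 * i) * magnon_amp n (2 * i) x)" by blast
    hence "v = (\<lambda>x. \<Sum>i<N. (c (2 * i) * ?s i) * code_vec n (2 * i) x)"
      using s by (auto simp: code_vec_def intro!: ext sum.cong)
    thus "\<exists>c. v = (\<lambda>x. \<Sum>i<N. c i * code_vec n (2 * i) x)"
      by (intro exI[where x = "\<lambda>i. c (2 * i) * ?s i"])
  next
    assume "\<exists>c. v = (\<lambda>x. \<Sum>i<N. c i * code_vec n (2 * i) x)"
    then obtain c where "v = (\<lambda>x. \<Sum>i<N. c i * code_vec n (2 * i) x)" by blast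
    hence "v = (\<lambda>x. \<Sum>i<N. c i / ?s i * magnon_amp n (2 * i) x)"
      by (simp add: code_vec_def)
    thus "\<exists>c. v = (\<lambda>x. \<Sum>i<N. c (2 * i) * magnon_amp n (2 * i) x)"
      by (intro exI[where x = "\<lambda>r. c (r div 2) / ?s (r div 2)"]) simp
  qed
  thus ?thesis unfolding desc_span_def reindex by blast
qed

lemma inner_code_vec_local_op_near_scalar:
  assumes n: "n \<ge> 2" "4 * N \<le> n" and d: "8 * real d * (real N)\<^sup>2 \<le> real n"
    and F: "local_op n d F" "op_norm n F \<le> 1" and il: "i < N" "l < N"
  shows "cmod (inner_q n (code_vec n (2 * i)) (app n F (code_vec n (2 * l))) -
           F {..<n} {..<n} * (if i = l then 1 else 0)) \<le> 3 * sqrt (8 * real d * (real N)\<^sup>2 / real n)"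
proof -
  define e where "e = sqrt (8 * real d * (real N)\<^sup>2 / real n)"
  have npos: "real n > 0" using n by simp
  have e0: "e \<ge> 0" and e1: "e \<le> 1"
    using d npos by (simp_all add: e_def)
  have unfilled: "vnorm n (unfilled_part S (code_vec n (2 * j))) \<le> e"
    if j: "j < N" and S: "S \<subseteq> {..<n}" "card S = d" for j S
  proof -
    have "vnorm n (unfilled_part S (code_vec n (2 * j))) \<le>
        sqrt (2 * real d * (real (2 * j + 1))\<^sup>2 / real n)"
      using n j S by (intro vnorm_unfilled_code_vec_le) auto
    also have "\<dots> \<le> sqrt (2 * real d * (2 * real N)\<^sup>2 / real n)"
      using j npos by (intro real_sqrt_le_mono divide_right_mono mult_left_mono power_mono) auto
    also have "\<dots> = e" by (simp add: e_def power2_eq_square)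
    finally show ?thesis .
  qed
  have "cmod (inner_q n (code_vec n (2 * i)) (app n F (code_vec n (2 * l))) -
      F {..<n} {..<n} * inner_q n (code_vec n (2 * i)) (code_vec n (2 * l))) \<le> 2 * e + e\<^sup>2"
    using n il unfilled by (intro local_op_inner_near_scalar[OF F]) (simp_all add: vnorm_code_vec)
  moreover have "e\<^sup>2 \<le> e" using e0 e1 by (simp add: power2_eq_square mult_left_le)
  ultimately show ?thesis
    using n il by (simp add: inner_q_code_vec e_def)
qed

lemma AQEDC_desc_span_even:
  fixes eps delta :: real
  assumes n: "n \<ge> 2" and N: "N = 2 ^ k" "4 * N \<le> n"
    and d: "8 * real d * (real N)\<^sup>2 \<le> real n"
    and err: "72 * real d * real N ^ 5 \<le> eps * delta * real n" and delta: "delta > 0"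
  shows "AQEDC n eps delta k d (desc_span n ((\<lambda>i. 2 * i) ` {..<N}))"
proof -
  define b where "b i = code_vec n (2 * i)" for i
  define e where "e = sqrt (8 * real d * (real N)\<^sup>2 / real n)"
  have orth: "\<forall>i<N. \<forall>j<N. inner_q n (b i) (b j) = (if i = j then 1 else 0)"
    using n N by (auto simp: b_def inner_q_code_vec)
  have \<eta>: "real N ^ 3 * (3 * e)\<^sup>2 \<le> eps * delta"
  proof -
    have "real N ^ 3 * (3 * e)\<^sup>2 = 72 * real d * real N ^ 5 / real n"
      using n by (simp add: e_def power_mult_distrib field_simps eval_nat_numeral)
    thus ?thesis using err n by (simp add: divide_le_eq)
  qed
  show ?thesis
    unfolding AQEDC_def Let_def
  proof (intro exI[of _ b] conjI allI impI)
    show "b i x = 0" if "x \<notin> cfg n" for i x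
      using that by (simp add: b_def code_vec_outside_cfg)
    show "inner_q n (b i) (b j) = (if i = j then 1 else 0)" if "i < 2 ^ k" "j < 2 ^ k" for i j
      using orth that N by simp
    show "desc_span n ((\<lambda>i. 2 * i) ` {..<N}) = {v. \<exists>c. v = (\<lambda>x. \<Sum>i<2 ^ k. c i * b i x)}"
      using desc_span_even_eq[OF n N(2)] N by (simp add: b_def)
    show "approx_detect n eps delta (desc_span n ((\<lambda>i. 2 * i) ` {..<N}))
        (\<lambda>x y. \<Sum>i<2 ^ k. ketbra (b i) (b i) x y) (channel n m p K)"
      if "admissible_noise n d m p K" for m p K
      using approx_detect_of_near_scalar[OF orth _ \<eta> delta that] desc_span_even_eq[OF n N(2)] N
        inner_code_vec_local_op_near_scalar[OF n N(2) d]
      by (simp add: b_def proj_q_def e_def)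
  qed
qed

section \<open>Choice of the parameters\<close>

lemma two_power_floor_log_le:
  assumes "kappa \<ge> 0" "real n \<ge> 1"
  shows "real ((2::nat) ^ nat \<lfloor>kappa * log 2 (real n)\<rfloor>) \<le> real n powr kappa"
proof -
  have "real ((2::nat) ^ nat \<lfloor>kappa * log 2 (real n)\<rfloor>) = 2 powr real_of_int \<lfloor>kappa * log 2 (real n)\<rfloor>"
    using assms by (simp add: powr_realpow[symmetric])
  also have "\<dots> \<le> 2 powr (kappa * log 2 (real n))"
    by (intro powr_mono) auto
  also have "\<dots> = (2 powr log 2 (real n)) powr kappa"
    by (simp add: powr_powr mult.commute)
  also have "\<dots> = real n powr kappa"
    using assms by simp
  finally show ?thesis .
qed

lemma code_size_estimates:
  fixes nu kappa lam :: real
  assumes n: "n \<ge> 2" and kappa: "kappa > 0" and small: "8 * real n powr (2 * kappa - nu) \<le> 1"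
    and N: "real N \<le> real n powr kappa" and d: "real d \<le> real n powr (1 - nu)"
  shows "8 * real d * (real N)\<^sup>2 \<le> real n"
    and "72 * real d * real N ^ 5 \<le>
           72 * real n powr (- (nu - (6 * kappa + lam))) * real n powr (- lam) * real n"
proof -
  have npos: "real n > 0" using n by simp
  have powr_mult_n: "real n powr a * real n = real n powr (a + 1)" for a
    using powr_mult_base[of "real n" a] by (simp add: mult.commute add.commute)
  have "8 * real d * (real N)\<^sup>2 \<le> 8 * real n powr (1 - nu) * (real n powr kappa)\<^sup>2"
    using N d by (intro mult_mono power_mono) auto
  also have "\<dots> = 8 * real n powr (2 * kappa - nu) * real n"
    unfolding mult.assoc powr_mult_n using npos
    by (simp add: powr_power powr_add[symmetric] algebra_simps)
  also have "\<dots> \<le> real n" using small npos by simp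
  finally show "8 * real d * (real N)\<^sup>2 \<le> real n" .
  have "72 * real d * real N ^ 5 \<le> 72 * real n powr (1 - nu) * (real n powr kappa) ^ 5"
    using N d by (intro mult_mono power_mono) auto
  also have "\<dots> = 72 * real n powr (1 - nu + 5 * kappa)"
    using npos by (simp add: powr_power powr_add)
  also have "\<dots> \<le> 72 * real n powr (1 - nu + 6 * kappa)"
    using kappa n by (intro mult_left_mono powr_mono) auto
  also have "\<dots> = 72 * real n powr (- (nu - (6 * kappa + lam))) * real n powr (- lam) * real n"
    unfolding mult.assoc powr_mult_n by (simp only: powr_add[symmetric]) (simp add: algebra_simps)
  finally show "72 * real d * real N ^ 5 \<le>
      72 * real n powr (- (nu - (6 * kappa + lam))) * real n powr (- lam) * real n" .
qed

lemma AQEDC_descendants_large_n: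
  fixes nu kappa lam :: real
  assumes n: "n \<ge> 2" and kappa: "kappa > 0"
    and small: "8 * real n powr (2 * kappa - nu) \<le> 1" and N_le: "4 * real n powr kappa \<le> real n"
  shows "\<exists>R C. R \<subseteq> {0..n - 2} \<and> (\<forall>r\<in>R. \<forall>s\<in>R. r \<noteq> s \<longrightarrow> r + 2 \<le> s \<or> s + 2 \<le> r) \<and>
           C = desc_span n R \<and>
           AQEDC n (72 * real n powr (- (nu - (6 * kappa + lam)))) (real n powr (- lam))
                 (nat \<lfloor>kappa * log 2 (real n)\<rfloor>) (nat \<lfloor>real n powr (1 - nu)\<rfloor>) C"
proof -
  define k where "k = nat \<lfloor>kappa * log 2 (real n)\<rfloor>"
  define d where "d = nat \<lfloor>real n powr (1 - nu)\<rfloor>"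
  define N :: nat where "N = 2 ^ k"
  have N: "real N \<le> real n powr kappa"
    unfolding N_def k_def using kappa n by (intro two_power_floor_log_le) auto
  have d: "real d \<le> real n powr (1 - nu)"
    unfolding d_def by simp
  have N4: "4 * N \<le> n" using N N_le by linarith
  have "AQEDC n (72 * real n powr (- (nu - (6 * kappa + lam)))) (real n powr (- lam)) k d
      (desc_span n ((\<lambda>i. 2 * i) ` {..<N}))"
    using n code_size_estimates[OF n kappa small N d]
    by (intro AQEDC_desc_span_even[OF n N_def N4]) simp_all
  moreover have "(\<lambda>i. 2 * i) ` {..<N} \<subseteq> {0..n - 2}" using N4 by auto
  moreover have "\<forall>r\<in>(\<lambda>i. 2 * i) ` {..<N}. \<forall>s\<in>(\<lambda>i. 2 * i) ` {..<N}.
      r \<noteq> s \<longrightarrow> r + 2 \<le> s \<or> s + 2 \<le> r"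
    by auto
  ultimately show ?thesis unfolding k_def d_def by blast
qed

lemma eventually_parameters_admissible:
  fixes nu kappa :: real
  assumes "2 * kappa < nu" "nu < 1"
  shows "\<forall>\<^sub>F n in sequentially. n \<ge> 2 \<and> 8 * real n powr (2 * kappa - nu) \<le> 1 \<and>
           4 * real n powr kappa \<le> real n"
proof -
  have "\<forall>\<^sub>F n in sequentially. real n powr (2 * kappa - nu) < 1 / 8"
    using assms
    by (intro order_tendstoD(2)[OF tendsto_neg_powr[OF _ filterlim_real_sequentially]]) auto
  moreover have "\<forall>\<^sub>F n in sequentially. real n powr (kappa - 1) < 1 / 4"
    using assms
    by (intro order_tendstoD(2)[OF tendsto_neg_powr[OF _ filterlim_real_sequentially]]) auto
  ultimately show ?thesis
    using eventually_ge_at_top[of 2]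
  proof eventually_elim
    case (elim n)
    have "real n powr kappa = real n powr (kappa - 1) * real n"
      using elim(3) by (simp add: powr_diff)
    thus ?case using elim by (simp add: mult_right_mono)
  qed
qed

theorem theorem8:
  fixes nu kappa lam :: real
  assumes "0 < nu" "nu < 1" "kappa > 0" "lam > 0" "6 * kappa + lam < nu"
  shows "\<exists>eps :: nat \<Rightarrow> real.
           eps \<in> \<Theta>(\<lambda>n. real n powr (- (nu - (6 * kappa + lam)))) \<and>
           (\<forall>\<^sub>F n in sequentially. \<exists>R C.
              R \<subseteq> {0..n - 2} \<and>
              (\<forall>r\<in>R. \<forall>s\<in>R. r \<noteq> s \<longrightarrow> r + 2 \<le> s \<or> s + 2 \<le> r) \<and>
              C = desc_span n R \<and>
              AQEDC n (eps n) (real n powr (- lam))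
                    (nat \<lfloor>kappa * log 2 (real n)\<rfloor>) (nat \<lfloor>real n powr (1 - nu)\<rfloor>) C)"
proof (intro exI conjI)
  show "(\<lambda>n. 72 * real n powr (- (nu - (6 * kappa + lam)))) \<in>
      \<Theta>(\<lambda>n. real n powr (- (nu - (6 * kappa + lam))))"
    by simp
  have "2 * kappa < nu" using assms by linarith
  from eventually_parameters_admissible[OF this assms(2)]
  show "\<forall>\<^sub>F n in sequentially. \<exists>R C.
      R \<subseteq> {0..n - 2} \<and> (\<forall>r\<in>R. \<forall>s\<in>R. r \<noteq> s \<longrightarrow> r + 2 \<le> s \<or> s + 2 \<le> r) \<and>
      C = desc_span n R \<and>
      AQEDC n (72 * real n powr (- (nu - (6 * kappa + lam)))) (real n powr (- lam))
        (nat \<lfloor>kappa * log 2 (real n)\<rfloor>) (nat \<lfloor>real n powr (1 - nu)\<rfloor>) C"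
    by (rule eventually_mono) (elim conjE, rule AQEDC_descendants_large_n[OF _ assms(3)])
qed

end
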